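(* A quadruple of points of the quaternionic projective line $\mathbb{P}^1(\mathbb{H})$ is semi-stable if and only if no point is repeated more than twice.
   Context: $\mathbb{H}$ denotes Hamilton's quaternions (generators $i,j,k$), $\mathbb{P}^1(\mathbb{H})$ the set of rank-one right $\mathbb{H}$-submodules of $\mathbb{H}^2$. Let $\tau(x_1,x_2,x_3,x_4)=(-\bar x_2,\bar x_1,-\bar x_4,\bar x_3)$ on $\mathbb{C}^4$. Points of $\mathbb{P}^1(\mathbb{H})$ are identified with complex planes of $\mathbb{C}^4$ of the form $\langle x,\tau(x)\rangle$, $x\ne0$, the plane $\langle x,\tau(x)\rangle$ corresponding to the right $\mathbb{H}$-module generated by $(x_1+jx_2,\,x_3+jx_4)$. A quadruple of points of $\mathbb{P}^1(\mathbb{H})$ is semi-stable if the corresponding quadruple of complex planes is semi-stable for the diagonal action of $\mathrm{SL}_4(\mathbb{C})$ on $\mathrm{Gr}(2,4)^4$ with the Plücker linearization, i.e. some $\mathrm{SL}_4(\mathbb{C})$-invariant section of a positive power of $\bigotimes_i\mathrm{pr}_i^*\mathcal{O}(1)$ does not vanish. *)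

theory Defs
  imports "HOL-Analysis.Analysis"
begin

inductive poly_fun :: "(('v \<Rightarrow> complex) \<Rightarrow> complex) \<Rightarrow> bool" where
  pf_const: "poly_fun (\<lambda>z. c)"
| pf_var: "poly_fun (\<lambda>z. z i)"
| pf_add: "poly_fun f \<Longrightarrow> poly_fun g \<Longrightarrow> poly_fun (\<lambda>z. f z + g z)"
| pf_mult: "poly_fun f \<Longrightarrow> poly_fun g \<Longrightarrow> poly_fun (\<lambda>z. f z * g z)"

text \<open>Pluecker coordinates of the plane spanned by u and v (all 16 antisymmetric
  coordinates u_i v_j - u_j v_i, i.e. the 2x2 minors).\<close>
definition pluecker :: "complex^4 \<Rightarrow> complex^4 \<Rightarrow> 4 \<Rightarrow> 4 \<Rightarrow> complex" where
  "pluecker u v i j = u$i * v$j - u$j * v$i"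

definition pluecker4 :: "(4 \<Rightarrow> complex^4) \<Rightarrow> (4 \<Rightarrow> complex^4) \<Rightarrow> (4 \<times> 4 \<times> 4 \<Rightarrow> complex)" where
  "pluecker4 u v = (\<lambda>(k,i,j). pluecker (u k) (v k) i j)"

text \<open>An SL_4(C)-invariant section of O(d,d,d,d) on Gr(2,4)^4 (Pluecker linearization),
  represented by a polynomial in the Pluecker coordinates that is multihomogeneous of
  degree d in each factor and invariant on the affine cone.\<close>
definition invariant_section :: "nat \<Rightarrow> ((4 \<times> 4 \<times> 4 \<Rightarrow> complex) \<Rightarrow> complex) \<Rightarrow> bool" where
  "invariant_section d F \<longleftrightarrow>
     poly_fun F \<and>
     (\<forall>t :: 4 \<Rightarrow> complex. \<forall>z. F (\<lambda>(k,i,j). t k * z (k,i,j)) = (\<Prod>k\<in>UNIV. t k ^ d) * F z) \<and>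
     (\<forall>g :: complex^4^4. det g = 1 \<longrightarrow> (\<forall>u v.
        F (pluecker4 (\<lambda>k. g *v u k) (\<lambda>k. g *v v k)) = F (pluecker4 u v)))"

definition semistable_planes :: "(4 \<Rightarrow> complex^4) \<Rightarrow> (4 \<Rightarrow> complex^4) \<Rightarrow> bool" where
  "semistable_planes u v \<longleftrightarrow>
     (\<exists>d>0. \<exists>F. invariant_section d F \<and> F (pluecker4 u v) \<noteq> 0)"

definition tau :: "complex^4 \<Rightarrow> complex^4" where
  "tau x = vector [- cnj (x$2), cnj (x$1), - cnj (x$4), cnj (x$3)]"

text \<open>The point of P^1(H) determined by x, as the complex plane span(x, tau x).\<close>
definition qpoint :: "complex^4 \<Rightarrow> (complex^4) set" where
  "qpoint x = {a *s x + b *s tau x | a b. True}"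

definition q_semistable :: "(4 \<Rightarrow> complex^4) \<Rightarrow> bool" where
  "q_semistable x \<longleftrightarrow> semistable_planes x (\<lambda>k. tau (x k))"

end

theory Submission
  imports Defs
begin

text \<open>Since \<open>x\<close> and \<open>tau x\<close> are
  orthogonal of equal length, \<open>|x|\<^sup>2 det[x, tau x, y, tau y]\<close> is a squared length (a Gram
  determinant), so two points coincide iff this determinant, a wedge pairing of their Pluecker
  vectors, vanishes. If no point occurs three times, the four points split into two pairs of
  distinct points, and the product of the two pairings is an invariant of degree one that does
  not vanish on the quadruple. Conversely, if three points equal \<open>W\<close>, the one-parameter
  subgroup of \<open>SL\<^sub>4\<close> acting by \<open>t\<close> on \<open>W\<close> and by \<open>1/t\<close> on a complement fixes every
  invariant section \<open>F\<close> of degree \<open>d\<close>, yet rewrites \<open>F\<close> on the quadruple as \<open>t\<^sup>4\<^sup>d\<close>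
  times a function continuous at \<open>t = 0\<close>; letting \<open>t \<rightarrow> 0\<close> shows that \<open>F\<close> vanishes there.\<close>

section \<open>Linear algebra in dimension four\<close>

lemma det_4:
  "det (A::'a::comm_ring_1^4^4) =
      A$1$1 * A$2$2 * A$3$3 * A$4$4 - A$1$1 * A$2$2 * A$3$4 * A$4$3
    - A$1$1 * A$2$3 * A$3$2 * A$4$4 + A$1$1 * A$2$3 * A$3$4 * A$4$2
    + A$1$1 * A$2$4 * A$3$2 * A$4$3 - A$1$1 * A$2$4 * A$3$3 * A$4$2
    - A$1$2 * A$2$1 * A$3$3 * A$4$4 + A$1$2 * A$2$1 * A$3$4 * A$4$3
    + A$1$2 * A$2$3 * A$3$1 * A$4$4 - A$1$2 * A$2$3 * A$3$4 * A$4$1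
    - A$1$2 * A$2$4 * A$3$1 * A$4$3 + A$1$2 * A$2$4 * A$3$3 * A$4$1
    + A$1$3 * A$2$1 * A$3$2 * A$4$4 - A$1$3 * A$2$1 * A$3$4 * A$4$2
    - A$1$3 * A$2$2 * A$3$1 * A$4$4 + A$1$3 * A$2$2 * A$3$4 * A$4$1
    + A$1$3 * A$2$4 * A$3$1 * A$4$2 - A$1$3 * A$2$4 * A$3$2 * A$4$1
    - A$1$4 * A$2$1 * A$3$2 * A$4$3 + A$1$4 * A$2$1 * A$3$3 * A$4$2
    + A$1$4 * A$2$2 * A$3$1 * A$4$3 - A$1$4 * A$2$2 * A$3$3 * A$4$1
    - A$1$4 * A$2$3 * A$3$1 * A$4$2 + A$1$4 * A$2$3 * A$3$2 * A$4$1"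
proof -
  have f234: "finite {2::4, 3, 4}" "1 \<notin> {2::4, 3, 4}" by auto
  have f34: "finite {3::4, 4}" "2 \<notin> {3::4, 4}" by auto
  have f4: "finite {4::4}" "3 \<notin> {4::4}" by auto
  show ?thesis
    unfolding det_def UNIV_4
    unfolding sum_over_permutations_insert[OF f234] sum_over_permutations_insert[OF f34]
      sum_over_permutations_insert[OF f4] permutes_sing
    by (simp add: sign_swap_id permutation_swap_id permutation_compose sign_compose sign_id
        swap_id_eq algebra_simps)
qed

lemma vector_4 [simp]:
  "(vector [a,b,c,d] :: ('a::zero)^4) $ 1 = a"
  "(vector [a,b,c,d] :: ('a::zero)^4) $ 2 = b"
  "(vector [a,b,c,d] :: ('a::zero)^4) $ 3 = c"
  "(vector [a,b,c,d] :: ('a::zero)^4) $ 4 = d"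
  unfolding vector_def by simp_all

lemma vec_eq_iff_4: "(u::'a^4) = v \<longleftrightarrow> u$1 = v$1 \<and> u$2 = v$2 \<and> u$3 = v$3 \<and> u$4 = v$4"
  by (auto simp: vec_eq_iff forall_4)

definition col_matrix :: "'a^4 \<Rightarrow> 'a^4 \<Rightarrow> 'a^4 \<Rightarrow> 'a^4 \<Rightarrow> 'a^4^4" where
  "col_matrix a b c d = (\<chi> i j. if j = 1 then a$i else if j = 2 then b$i else if j = 3 then c$i else d$i)"

lemma col_matrix_nth [simp]:
  "col_matrix a b c d $ i $ 1 = a$i" "col_matrix a b c d $ i $ 2 = b$i"
  "col_matrix a b c d $ i $ 3 = c$i" "col_matrix a b c d $ i $ 4 = d$i"
  unfolding col_matrix_def by simp_all

lemma matrix_mult_col_matrix: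
  "(g::'a::semiring_1^4^4) ** col_matrix a b c d = col_matrix (g *v a) (g *v b) (g *v c) (g *v d)"
  by (simp add: vec_eq_iff matrix_matrix_mult_def matrix_vector_mult_def col_matrix_def)

lemma col_matrix_mult_axis:
  "col_matrix a b c d *v axis 1 1 = (a::'a::semiring_1^4)"
  "col_matrix a b c d *v axis 2 1 = b"
  by (simp_all add: vec_eq_iff_4 matrix_vector_mult_def sum_4 axis_def)

lemma pluecker_scale: "pluecker (c *s a) (c *s b) i j = c * c * pluecker a b i j"
  unfolding pluecker_def by (simp add: algebra_simps)

definition pluecker_wedge :: "(4 \<times> 4 \<times> 4 \<Rightarrow> complex) \<Rightarrow> 4 \<Rightarrow> 4 \<Rightarrow> complex" where
  "pluecker_wedge z k l = z(k,1,2)*z(l,3,4) - z(k,1,3)*z(l,2,4) + z(k,1,4)*z(l,2,3)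
     + z(k,2,3)*z(l,1,4) - z(k,2,4)*z(l,1,3) + z(k,3,4)*z(l,1,2)"

lemma pluecker_wedge_eq_det:
  "pluecker_wedge (pluecker4 u v) k l = det (col_matrix (u k) (v k) (u l) (v l))"
  unfolding pluecker_wedge_def pluecker4_def pluecker_def det_4 by (simp add: algebra_simps)

lemma pluecker_wedge_scale:
  "pluecker_wedge (\<lambda>(k,i,j). t k * z (k,i,j)) k l = t k * t l * pluecker_wedge z k l"
  unfolding pluecker_wedge_def by (simp add: algebra_simps)

section \<open>Points of the quaternionic projective line\<close>

lemma tau_nth [simp]:
  "tau x $ 1 = - cnj (x$2)" "tau x $ 2 = cnj (x$1)" "tau x $ 3 = - cnj (x$4)" "tau x $ 4 = cnj (x$3)"
  unfolding tau_def by simp_all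

lemma tau_tau: "tau (tau x) = - x"
  by (simp add: vec_eq_iff_4)

lemma tau_lincomb: "tau (a *s x + b *s y) = cnj a *s tau x + cnj b *s tau y"
  by (simp add: vec_eq_iff_4)

lemma in_qpoint_self: "x \<in> qpoint x" and tau_in_qpoint_self: "tau x \<in> qpoint x"
proof -
  have "x = 1 *s x + 0 *s tau x" "tau x = 0 *s x + 1 *s tau x" by (simp_all add: vec_eq_iff_4)
  then show "x \<in> qpoint x" "tau x \<in> qpoint x" unfolding qpoint_def by blast+
qed

lemma qpoint_subset: "y \<in> qpoint x \<Longrightarrow> qpoint y \<subseteq> qpoint x"
proof
  fix z assume "y \<in> qpoint x" "z \<in> qpoint y"
  then obtain a b c d where y: "y = a *s x + b *s tau x" and z: "z = c *s y + d *s tau y"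
    unfolding qpoint_def by blast
  have "tau y = (- cnj b) *s x + cnj a *s tau x"
    unfolding y tau_lincomb tau_tau by (simp add: vec_eq_iff_4)
  then have "z = (c * a - d * cnj b) *s x + (c * b + d * cnj a) *s tau x"
    unfolding z y by (simp add: vec_eq_iff_4 algebra_simps)
  then show "z \<in> qpoint x" unfolding qpoint_def by blast
qed

definition herm :: "complex^4 \<Rightarrow> complex^4 \<Rightarrow> complex" where
  "herm a b = a$1 * cnj (b$1) + a$2 * cnj (b$2) + a$3 * cnj (b$3) + a$4 * cnj (b$4)"

lemma herm_self_eq_0_iff: "herm z z = 0 \<longleftrightarrow> z = 0"
proof
  assume "herm z z = 0"
  moreover have "herm z z =
      of_real ((cmod (z$1))\<^sup>2 + (cmod (z$2))\<^sup>2 + (cmod (z$3))\<^sup>2 + (cmod (z$4))\<^sup>2)"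
    unfolding herm_def of_real_add complex_norm_square ..
  ultimately have "(cmod (z$1))\<^sup>2 + (cmod (z$2))\<^sup>2 + (cmod (z$3))\<^sup>2 + (cmod (z$4))\<^sup>2 = 0"
    using of_real_eq_0_iff by metis
  then have "cmod (z$1) = 0 \<and> cmod (z$2) = 0 \<and> cmod (z$3) = 0 \<and> cmod (z$4) = 0"
    by (smt (verit) zero_le_power2 zero_eq_power2)
  then show "z = 0" by (simp add: vec_eq_iff_4)
qed (simp add: herm_def)

definition qdet :: "complex^4 \<Rightarrow> complex^4 \<Rightarrow> complex" where
  "qdet x y = det (col_matrix x (tau x) y (tau y))"

lemma qdet_commute: "qdet x y = qdet y x"
  unfolding qdet_def det_4 by (simp add: algebra_simps)

text \<open>Gram identity: \<open>z\<close> is \<open>|x|\<^sup>2\<close> times the component of \<open>y\<close> orthogonal to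
  \<open>x\<close> and \<open>tau x\<close>.\<close>
lemma herm_mult_qdet:
  fixes x y :: "complex^4"
  defines "z \<equiv> herm x x *s y - herm y x *s x - herm y (tau x) *s tau x"
  shows "herm x x * qdet x y = herm z z"
  unfolding z_def qdet_def det_4 herm_def by (simp add: algebra_simps)

lemma qdet_eq_0_imp_in_qpoint:
  assumes "x \<noteq> 0" "qdet x y = 0"
  shows "y \<in> qpoint x"
proof -
  have N: "herm x x \<noteq> 0" using assms(1) herm_self_eq_0_iff by blast
  have "herm x x *s y - herm y x *s x - herm y (tau x) *s tau x = 0"
    using herm_mult_qdet[of x y] assms(2) herm_self_eq_0_iff by simp
  then have "y = (herm y x / herm x x) *s x + (herm y (tau x) / herm x x) *s tau x"
    using N by (simp add: vec_eq_iff_4 field_simps)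
  then show ?thesis unfolding qpoint_def by blast
qed

lemma qpoint_eq_if_qdet_eq_0:
  assumes "x \<noteq> 0" "y \<noteq> 0" "qdet x y = 0"
  shows "qpoint x = qpoint y"
  using qpoint_subset qdet_eq_0_imp_in_qpoint assms qdet_commute by (metis subset_antisym)

lemma exists_qdet_nonzero:
  assumes "w \<noteq> 0"
  shows "\<exists>y. qdet w y \<noteq> 0"
proof (rule ccontr)
  assume "\<not> ?thesis"
  then have "qdet w (axis 1 1) + qdet w (axis 3 1) = 0" by simp
  then have "herm w w = 0"
    unfolding qdet_def det_4 herm_def by (simp add: axis_def algebra_simps)
  then show False using herm_self_eq_0_iff assms by blast
qed

section \<open>Invariant sections\<close>

lemma poly_fun_diff: "poly_fun f \<Longrightarrow> poly_fun g \<Longrightarrow> poly_fun (\<lambda>z. f z - g z)"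
proof -
  assume "poly_fun f" "poly_fun g"
  then have "poly_fun (\<lambda>z. f z + (\<lambda>z. -1) z * g z)"
    by (intro pf_add pf_mult pf_const)
  then show ?thesis by simp
qed

lemma poly_fun_pluecker_wedge: "poly_fun (\<lambda>z. pluecker_wedge z k l)"
  unfolding pluecker_wedge_def by (intro pf_add poly_fun_diff pf_mult pf_var)

lemma poly_fun_isCont:
  "poly_fun F \<Longrightarrow> (\<And>v. isCont (\<lambda>s. Z s v) s0) \<Longrightarrow> isCont (\<lambda>s. F (Z s)) s0"
  by (induction F rule: poly_fun.induct) (simp_all add: continuous_add continuous_mult)

lemma UNIV_4_eq_distinct:
  assumes "distinct [a,b,c,d::4]"
  shows "UNIV = {a,b,c,d}"
proof -
  have "card {a,b,c,d} = card (UNIV :: 4 set)" using assms by simp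
  then show ?thesis by (metis card_subset_eq finite subset_UNIV)
qed

lemma semistable_planes_if_matching:
  assumes dist: "distinct [a,b,c,d::4]"
    and ab: "pluecker_wedge (pluecker4 u v) a b \<noteq> 0"
    and cd: "pluecker_wedge (pluecker4 u v) c d \<noteq> 0"
  shows "semistable_planes u v"
proof -
  define F where "F z = pluecker_wedge z a b * pluecker_wedge z c d" for z
  have "poly_fun F" unfolding F_def by (intro pf_mult poly_fun_pluecker_wedge)
  moreover have "F (\<lambda>(k,i,j). t k * z (k,i,j)) = (\<Prod>k\<in>UNIV. t k ^ 1) * F z" for t z
    using dist unfolding F_def pluecker_wedge_scale UNIV_4_eq_distinct[OF dist]
    by (simp add: algebra_simps)
  moreover have "F (pluecker4 (\<lambda>k. g *v u k) (\<lambda>k. g *v v k)) = F (pluecker4 u v)"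
    if "det g = 1" for g :: "complex^4^4" and u v
    using that unfolding F_def pluecker_wedge_eq_det matrix_mult_col_matrix[symmetric] det_mul
    by simp
  ultimately have "invariant_section 1 F"
    unfolding invariant_section_def by blast
  moreover have "F (pluecker4 u v) \<noteq> 0" using ab cd F_def by simp
  ultimately show ?thesis unfolding semistable_planes_def by blast
qed

definition diag2 :: "complex \<Rightarrow> complex \<Rightarrow> complex^4^4" where
  "diag2 p q = (\<chi> i j. if i = j then (if i = 1 \<or> i = 2 then p else q) else 0)"

lemma det_diag2: "det (diag2 p q) = p * p * q * q"
  unfolding det_4 diag2_def by simp

lemma diag2_mult_vector: "diag2 p q *v y = vector [p * y$1, p * y$2, q * y$3, q * y$4]"
  by (simp add: vec_eq_iff_4 matrix_vector_mult_def sum_4 diag2_def)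

lemma isCont_diag2_square: "isCont (\<lambda>t. diag2 (t^2) 1 $ i $ j) t0"
  by (cases "i = j"; cases "i = 1 \<or> i = 2") (simp_all add: diag2_def)

lemma qpoint_frame:
  assumes "w \<noteq> 0"
  obtains M Mi :: "complex^4^4"
  where "M ** Mi = mat 1" "Mi *v w = axis 1 1" "Mi *v tau w = axis 2 1"
proof -
  obtain y where "qdet w y \<noteq> 0" using exists_qdet_nonzero[OF assms] by blast
  define M where "M = col_matrix w (tau w) y (tau y)"
  have "det M \<noteq> 0" using \<open>qdet w y \<noteq> 0\<close> unfolding M_def qdet_def .
  then obtain Mi where Mi: "M ** Mi = mat 1" "Mi ** M = mat 1"
    unfolding invertible_det_nz[symmetric] invertible_def by blast
  have "Mi *v w = axis 1 1" "Mi *v tau w = axis 2 1"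
    using Mi(2) col_matrix_mult_axis unfolding M_def
    by (metis matrix_vector_mul_assoc matrix_vector_mul_lid)+
  with Mi that show ?thesis by blast
qed

lemma frame_scaling_on_qpoint:
  assumes "M ** Mi = mat 1" "Mi *v w = axis 1 1" "Mi *v tau w = axis 2 1" "z \<in> qpoint w"
  shows "(M ** diag2 p q ** Mi) *v z = p *s z"
proof -
  obtain a b where "z = a *s w + b *s tau w" using assms(4) unfolding qpoint_def by blast
  then have "Mi *v z = a *s axis 1 1 + b *s axis 2 1"
    using assms(2,3) by (simp add: matrix_vector_right_distrib vector_scalar_commute)
  then have "diag2 p q *v (Mi *v z) = p *s (Mi *v z)"
    by (simp add: diag2_mult_vector vec_eq_iff_4 axis_def)
  then have "(M ** diag2 p q ** Mi) *v z = p *s (M *v (Mi *v z))"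
    by (simp add: matrix_vector_mul_assoc[symmetric] vector_scalar_commute)
  then show ?thesis using assms(1) by (simp add: matrix_vector_mul_assoc)
qed

lemma prod_UNIV_if_eq:
  fixes m :: "'a::finite"
  shows "(\<Prod>k\<in>UNIV. if k = m then a else b) = a * b ^ (CARD('a) - 1)"
proof -
  have "{k. k \<noteq> m} = UNIV - {m}" by blast
  then show ?thesis by (simp add: prod.If_cases Int_def card_Diff_singleton)
qed

text \<open>In the frame \<open>M\<close>, \<open>g\<^sub>t = diag(t, t, 1/t, 1/t)\<close> has determinant one and acts by \<open>t\<close>
  on \<open>qpoint w\<close>, and \<open>t g\<^sub>t = H\<close>. Hence it multiplies the Pluecker coordinates of the
  planes in \<open>qpoint w\<close> by \<open>t\<^sup>2\<close> and those of plane \<open>m\<close> by \<open>1/t\<^sup>2\<close> after replacing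
  \<open>g\<^sub>t\<close> by \<open>H\<close>, which is polynomial in \<open>t\<close>.\<close>
lemma invariant_section_rescale:
  assumes F: "invariant_section d F"
    and frame: "M ** Mi = mat 1" "Mi *v w = axis 1 1" "Mi *v tau w = axis 2 1"
    and planes: "\<forall>k. k \<noteq> m \<longrightarrow> u k \<in> qpoint w \<and> v k \<in> qpoint w" and t: "t \<noteq> 0"
  defines "H \<equiv> M ** diag2 (t^2) 1 ** Mi"
  shows "F (pluecker4 u v) = t ^ (4*d) * F (pluecker4 (u(m := H *v u m)) (v(m := H *v v m)))"
proof -
  define g where "g = M ** diag2 t (1/t) ** Mi"
  have "det g = det (M ** Mi)"
    unfolding g_def det_mul det_diag2 using t by (simp add: field_simps)
  then have "det g = 1" using frame(1) by simp
  have g_qpoint: "g *v z = t *s z" if "z \<in> qpoint w" for z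
    unfolding g_def using frame that by (rule frame_scaling_on_qpoint)
  have g_H: "g *v z = (1/t) *s (H *v z)" for z
  proof -
    have "diag2 t (1/t) *v y = (1/t) *s (diag2 (t^2) 1 *v y)" for y
      using t by (simp add: diag2_mult_vector vec_eq_iff_4 power2_eq_square)
    then show ?thesis
      unfolding g_def H_def matrix_vector_mul_assoc[symmetric] by (simp add: vector_scalar_commute)
  qed
  define c where "c k = (if k = m then 1/t^2 else t^2)" for k
  have "pluecker4 (\<lambda>k. g *v u k) (\<lambda>k. g *v v k)
      = (\<lambda>(k,i,j). c k * pluecker4 (u(m := H *v u m)) (v(m := H *v v m)) (k,i,j))"
  proof (intro ext, clarify)
    fix k i j
    show "pluecker4 (\<lambda>k. g *v u k) (\<lambda>k. g *v v k) (k,i,j)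
        = c k * pluecker4 (u(m := H *v u m)) (v(m := H *v v m)) (k,i,j)"
    proof (cases "k = m")
      case True
      then show ?thesis by (simp add: pluecker4_def c_def g_H pluecker_scale power2_eq_square)
    next
      case False
      then show ?thesis
        using planes by (simp add: pluecker4_def c_def g_qpoint pluecker_scale power2_eq_square)
    qed
  qed
  moreover have "(\<Prod>k\<in>UNIV. c k ^ d) = t ^ (4*d)"
    using t by (simp add: prod_power_distrib[symmetric] prod_UNIV_if_eq c_def power_mult[symmetric]
        eval_nat_numeral field_simps power_add[symmetric])
  moreover have "F (pluecker4 u v) = F (pluecker4 (\<lambda>k. g *v u k) (\<lambda>k. g *v v k))"
    using F \<open>det g = 1\<close> unfolding invariant_section_def by simp
  ultimately show ?thesis
    using F unfolding invariant_section_def by simp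
qed

lemma eq_0_if_eq_power_mult_isCont:
  fixes f :: "'a::real_normed_field \<Rightarrow> 'a"
  assumes "isCont f 0" "n > 0" "\<And>t. t \<noteq> 0 \<Longrightarrow> c = t ^ n * f t"
  shows "c = 0"
proof -
  have "(\<lambda>t. t ^ n * f t) \<midarrow>0\<rightarrow> 0 ^ n * f 0"
    using assms(1) by (intro tendsto_intros) (simp add: isCont_def)
  then have "(\<lambda>t. t ^ n * f t) \<midarrow>0\<rightarrow> 0" using assms(2) by (simp add: zero_power)
  moreover have "\<forall>\<^sub>F t in at 0. t ^ n * f t = c"
    using assms(3) by (auto simp: eventually_at_filter)
  ultimately have "((\<lambda>t::'a. c) \<midarrow>0\<rightarrow> 0)" by (rule Lim_transform_eventually)
  then show ?thesis by (rule LIM_const_eq)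
qed

lemma invariant_section_vanishes_if_three_in_qpoint:
  assumes F: "invariant_section d F" and "d > 0" and "w \<noteq> 0"
    and planes: "\<forall>k. k \<noteq> m \<longrightarrow> u k \<in> qpoint w \<and> v k \<in> qpoint w"
  shows "F (pluecker4 u v) = 0"
proof -
  obtain M Mi :: "complex^4^4" where frame:
    "M ** Mi = mat 1" "Mi *v w = axis 1 1" "Mi *v tau w = axis 2 1"
    using qpoint_frame[OF \<open>w \<noteq> 0\<close>] by blast
  define H where "H t = M ** diag2 (t^2) 1 ** Mi" for t
  define Z where "Z t = pluecker4 (u(m := H t *v u m)) (v(m := H t *v v m))" for t
  have H_cont: "isCont (\<lambda>t. (H t *v y) $ i) 0" for y i
    unfolding H_def matrix_vector_mult_def matrix_matrix_mult_def
    by (auto intro!: continuous_intros isCont_diag2_square)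
  have "isCont (\<lambda>t. Z t (k,i,j)) 0" for k i j
    by (cases "k = m") (auto simp: Z_def pluecker4_def pluecker_def intro!: continuous_intros H_cont)
  moreover have "poly_fun F" using F unfolding invariant_section_def by blast
  ultimately have "isCont (\<lambda>t. F (Z t)) 0"
    by (metis poly_fun_isCont prod_cases3)
  moreover have "F (pluecker4 u v) = t ^ (4*d) * F (Z t)" if "t \<noteq> 0" for t
    unfolding Z_def H_def using invariant_section_rescale[OF F frame planes that] .
  ultimately show ?thesis using \<open>d > 0\<close> by (intro eq_0_if_eq_power_mult_isCont) auto
qed

lemma obtain_all_but_one:
  fixes S :: "'a::finite set"
  assumes "CARD('a) \<le> Suc (card S)"
  obtains m where "\<And>k. k \<noteq> m \<Longrightarrow> k \<in> S"
proof -
  have "card (UNIV - S) \<le> Suc 0"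
    using assms by (simp add: card_Diff_subset)
  then have "\<forall>a\<in>UNIV - S. \<forall>b\<in>UNIV - S. a = b"
    using card_le_Suc0_iff_eq[of "UNIV - S"] by simp
  then show ?thesis using that by blast
qed

lemma obtain_matching_if_no_triple:
  fixes Q :: "4 \<Rightarrow> 'b"
  assumes "\<forall>k. card {l. Q l = Q k} \<le> 2"
  obtains a b c d where "distinct [a,b,c,d]" "Q a \<noteq> Q b" "Q c \<noteq> Q d"
proof -
  have no_triple: "Q i \<noteq> Q j \<or> Q i \<noteq> Q l" if "distinct [i,j,l]" for i j l
  proof (rule ccontr)
    assume "\<not> (Q i \<noteq> Q j \<or> Q i \<noteq> Q l)"
    then have "{i,j,l} \<subseteq> {l'. Q l' = Q i}" by auto
    then have "card {i,j,l} \<le> 2" using assms by (meson card_mono finite order_trans)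
    then show False using that by simp
  qed
  have "(Q 1 \<noteq> Q 2 \<and> Q 3 \<noteq> Q 4) \<or> (Q 1 \<noteq> Q 3 \<and> Q 2 \<noteq> Q 4) \<or> (Q 1 \<noteq> Q 4 \<and> Q 2 \<noteq> Q 3)"
    using no_triple[of 1 2 3] no_triple[of 1 2 4] no_triple[of 1 3 4] no_triple[of 2 3 4] by auto
  then show ?thesis
    using that[of 1 2 3 4] that[of 1 3 2 4] that[of 1 4 2 3] by auto
qed

lemma q_semistable_imp_no_triple:
  assumes "q_semistable x" "\<forall>k. x k \<noteq> 0"
  shows "card {l. qpoint (x l) = qpoint (x k)} \<le> 2"
proof (rule ccontr)
  assume "\<not> ?thesis"
  then have "CARD(4) \<le> Suc (card {l. qpoint (x l) = qpoint (x k)})" by simp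
  then obtain m where same: "\<And>l. l \<noteq> m \<Longrightarrow> qpoint (x l) = qpoint (x k)"
    by (rule obtain_all_but_one) blast
  have planes: "\<forall>l. l \<noteq> m \<longrightarrow> x l \<in> qpoint (x k) \<and> tau (x l) \<in> qpoint (x k)"
  proof (intro allI impI)
    fix l assume "l \<noteq> m"
    then show "x l \<in> qpoint (x k) \<and> tau (x l) \<in> qpoint (x k)"
      using same in_qpoint_self[of "x l"] tau_in_qpoint_self[of "x l"] by simp
  qed
  obtain d F where "invariant_section d F" "d > 0" "F (pluecker4 x (\<lambda>l. tau (x l))) \<noteq> 0"
    using assms(1) unfolding q_semistable_def semistable_planes_def by blast
  moreover have "x k \<noteq> 0" using assms(2) by blast
  ultimately show False
    using invariant_section_vanishes_if_three_in_qpoint[OF _ _ _ planes] by blast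
qed

lemma no_triple_imp_q_semistable:
  assumes "\<forall>k. card {l. qpoint (x l) = qpoint (x k)} \<le> 2" "\<forall>k. x k \<noteq> 0"
  shows "q_semistable x"
proof -
  obtain a b c d where "distinct [a,b,c,d]" "qpoint (x a) \<noteq> qpoint (x b)" "qpoint (x c) \<noteq> qpoint (x d)"
    using obtain_matching_if_no_triple[of "\<lambda>l. qpoint (x l)"] assms(1) by blast
  moreover have "pluecker_wedge (pluecker4 x (\<lambda>l. tau (x l))) k l \<noteq> 0"
    if "qpoint (x k) \<noteq> qpoint (x l)" for k l
    using that assms(2) qpoint_eq_if_qdet_eq_0 unfolding pluecker_wedge_eq_det qdet_def[symmetric]
    by blast
  ultimately show ?thesis
    unfolding q_semistable_def by (blast intro: semistable_planes_if_matching)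
qed

theorem proposition5p7:
  fixes x :: "4 \<Rightarrow> complex^4"
  assumes "\<forall>k. x k \<noteq> 0"
  shows "q_semistable x \<longleftrightarrow> (\<forall>k. card {l. qpoint (x l) = qpoint (x k)} \<le> 2)"
  using assms q_semistable_imp_no_triple no_triple_imp_q_semistable by blast

end
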